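(* Assume $\bm\lambda\neq0$ and $\bm\mu\neq 0$. (1) For every $k\ge1$, the vector $I^k w$ satisfies $E_{-i,j}\,I^kw=\lambda_i\mu_j\,I^kw$ for all $i\ge0$, $j\ge1$, and $I^kw\notin\mathbb C w$. (2) For every $d\in\mathbb C$, the $\widehat{\mathfrak{gl}}$-submodule $N_d$ of $M_1(\bm\lambda,\bm\mu)$ generated by the vectors $(I-d)I^kw$, $k\ge 0$, is a proper subspace of $M_1(\bm\lambda,\bm\mu)$.
   Context: Let $\widehat{\mathcal A}$ be the Weyl algebra: the unital associative complex algebra generated by $a(r),a^*(r)$ ($r\in\mathbb Z$) with relations $[a(r),a(s)]=[a^*(r),a^*(s)]=0$ and $[a(r),a^*(s)]=\delta_{r+s,0}$. Fix integers $n\ge 0$, $m\ge 1$, $\bm\lambda=(\lambda_0,\dots,\lambda_n)\in\mathbb C^{n+1}$, $\bm\mu=(\mu_1,\dots,\mu_m)\in\mathbb C^m$, and set $\lambda_i=0$ for $i>n$, $\mu_j=0$ for $j>m$. The Whittaker module $M_1(\bm\lambda,\bm\mu)=\widehat{\mathcal A}/\mathcal I$, where $\mathcal I$ is the left ideal generated by $a(i)-\lambda_i$ ($i\ge 0$) and $a^*(j)-\mu_j$ ($j\ge 1$); $w=w_{\bm\lambda,\bm\mu}$ denotes the image of $1$. Normal ordering: $:a(i)a^*(j):$ equals $a^*(j)a(i)$ if $i\ge 0$ and $j\le 0$, and equals $a(i)a^*(j)$ otherwise. For $i,j\in\mathbb Z$, $E_{i,j}:=\,:a(-i)a^*(j):$,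 an operator on $M_1(\bm\lambda,\bm\mu)$ (these give a $\widehat{\mathfrak{gl}}$-module structure of central charge $-1$); $\widehat{\mathfrak{gl}}$-submodules and generation refer to invariance under all $E_{i,j}$. $I:=\sum_{j\in\mathbb Z}E_{j,j}$, a well-defined operator on $M_1(\bm\lambda,\bm\mu)$ commuting with all $E_{i,j}$. *)

theory Defs
  imports Complex_Main "HOL-Library.Poly_Mapping"
begin

text \<open>Concrete (PBW / Fock) model of the Whittaker module M_1(lambda,mu).
  Variables: Inl r stands for the creation operator a(-(r+1)) (r >= 0),
  Inr s stands for the creation operator a*(-s) (s >= 0).
  A vector of M_1 is a finitely supported coefficient function on monomials;
  the monomial m corresponds to the vector (prod of variables^m) w.\<close>

type_synonym var = "nat + nat"
type_synonym mono = "var \<Rightarrow>\<^sub>0 nat"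
type_synonym vec = "mono \<Rightarrow> complex"

definition M1 :: "vec set" where
  "M1 = {f. finite {m. f m \<noteq> 0}}"

definition wvec :: vec where
  "wvec = (\<lambda>m. if m = 0 then 1 else 0)"

definition mulv :: "var \<Rightarrow> vec \<Rightarrow> vec" where
  "mulv v f = (\<lambda>m. if Poly_Mapping.lookup m v > 0 then f (m - Poly_Mapping.single v 1) else 0)"

definition der :: "var \<Rightarrow> vec \<Rightarrow> vec" where
  "der v f = (\<lambda>m. of_nat (Poly_Mapping.lookup m v + 1) * f (m + Poly_Mapping.single v 1))"

definition aop :: "(nat \<Rightarrow> complex) \<Rightarrow> int \<Rightarrow> vec \<Rightarrow> vec" where
  "aop lam r f = (if r < 0 then mulv (Inl (nat (- r) - 1)) f
                  else (\<lambda>m. lam (nat r) * f m + der (Inr (nat r)) f m))"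

definition astar :: "(nat \<Rightarrow> complex) \<Rightarrow> int \<Rightarrow> vec \<Rightarrow> vec" where
  "astar mu s f = (if s \<le> 0 then mulv (Inr (nat (- s))) f
                   else (\<lambda>m. mu (nat s) * f m - der (Inl (nat s - 1)) f m))"

text \<open>E_{i,j} = :a(-i) a*(j):\<close>
definition Eop :: "(nat \<Rightarrow> complex) \<Rightarrow> (nat \<Rightarrow> complex) \<Rightarrow> int \<Rightarrow> int \<Rightarrow> vec \<Rightarrow> vec" where
  "Eop lam mu i j f = (if - i \<ge> 0 \<and> j \<le> 0 then astar mu j (aop lam (- i) f)
                       else aop lam (- i) (astar mu j f))"

text \<open>I = sum over all j of E_{j,j}; on each vector only finitely many terms are nonzero,
  so the sum is taken over that finite set.\<close>
definition Iop :: "(nat \<Rightarrow> complex) \<Rightarrow> (nat \<Rightarrow> complex) \<Rightarrow> vec \<Rightarrow> vec" where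
  "Iop lam mu f = (\<lambda>m. \<Sum>j\<in>{j. Eop lam mu j j f \<noteq> (\<lambda>x. 0)}. Eop lam mu j j f m)"

inductive_set gen_sub :: "(nat \<Rightarrow> complex) \<Rightarrow> (nat \<Rightarrow> complex) \<Rightarrow> vec set \<Rightarrow> vec set"
  for lam mu S where
  base: "v \<in> S \<Longrightarrow> v \<in> gen_sub lam mu S"
| zero: "(\<lambda>m. 0) \<in> gen_sub lam mu S"
| add: "u \<in> gen_sub lam mu S \<Longrightarrow> v \<in> gen_sub lam mu S \<Longrightarrow> (\<lambda>m. u m + v m) \<in> gen_sub lam mu S"
| smult: "v \<in> gen_sub lam mu S \<Longrightarrow> (\<lambda>m. c * v m) \<in> gen_sub lam mu S"
| Eop: "v \<in> gen_sub lam mu S \<Longrightarrow> Eop lam mu i j v \<in> gen_sub lam mu S"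

end

theory Submission
  imports Defs
begin

text \<open>
  In the Fock model, where \<open>M\<^sub>1\<close> is a polynomial ring in creation variables \<open>x\<^sub>v\<close>, normal ordering
  turns \<open>I = \<Sum>\<^sub>j E\<^sub>j\<^sub>,\<^sub>j\<close> into \<open>\<Sum>\<^sub>v c\<^sub>v x\<^sub>v + \<Sum>\<^sub>v \<epsilon>\<^sub>v x\<^sub>v \<partial>\<^sub>v\<close> with \<open>\<epsilon>\<^sub>v = \<plusminus>1\<close>:
  a multiplication operator plus a signed Euler operator.
  From \<open>[a(r), I] = a(r)\<close> and \<open>[a\<^sup>*(s), I] = -a\<^sup>*(s)\<close> it follows that \<open>I\<close> commutes with every
  \<open>E\<^sub>i\<^sub>,\<^sub>j\<close>, so \<open>I\<^sup>k w\<close> lies in the same eigenspace of \<open>E\<^sub>-\<^sub>i\<^sub>,\<^sub>j\<close> as \<open>w\<close>.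
  If \<open>c\<^sub>v \<noteq> 0\<close> and \<open>q \<noteq> 0\<close>, pick a monomial \<open>m\<close> of \<open>q\<close> maximising a weight in which \<open>x\<^sub>v\<close>
  counts twice and every other \<open>x\<^sub>u\<close> with \<open>c\<^sub>u \<noteq> 0\<close> once: then the coefficient of \<open>(I - d) q\<close>
  at \<open>m x\<^sub>v\<close> is \<open>c\<^sub>v q(m) \<noteq> 0\<close>. Hence \<open>(I - d) q\<close> is never a multiple of \<open>w\<close>, which gives both
  \<open>I\<^sup>k w \<notin> \<complex>w\<close> and \<open>w \<notin> (I - d) M\<^sub>1\<close>; the latter space is a submodule containing the generators
  of \<open>N\<^sub>d\<close>.
\<close>

abbreviation expo :: "mono \<Rightarrow> var \<Rightarrow> nat" where
  "expo m v \<equiv> Poly_Mapping.lookup m v"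

text \<open>Written with \<open>Suc 0\<close>, the simp normal form of \<open>1 :: nat\<close>, so that it matches after simplification.\<close>

abbreviation var_mono :: "var \<Rightarrow> mono" where
  "var_mono v \<equiv> Poly_Mapping.single v (Suc 0)"

lemmas expo_simps = Poly_Mapping.lookup_add Poly_Mapping.lookup_minus Poly_Mapping.lookup_single

lemma diff_var_mono_add_cancel: "expo m v > 0 \<Longrightarrow> m - var_mono v + var_mono v = m"
  by (rule poly_mapping_eqI) (auto simp: expo_simps when_def)

lemma add_diff_var_mono_commute:
  "u \<noteq> v \<Longrightarrow> expo m u > 0 \<Longrightarrow> m + var_mono v - var_mono u = m - var_mono u + var_mono v"
  by (rule poly_mapping_eqI) (auto simp: expo_simps when_def)

lemma add_var_mono_neq_zero: "m + var_mono v \<noteq> 0"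
proof
  assume "m + var_mono v = 0"
  then have "expo (m + var_mono v) v = 0" by simp
  then show False by (simp add: expo_simps)
qed

lemma mulv_simps:
  "mulv v (\<lambda>x. 0) m = 0"
  "mulv v (\<lambda>x. f x + g x) m = mulv v f m + mulv v g m"
  "mulv v (\<lambda>x. f x - g x) m = mulv v f m - mulv v g m"
  "mulv v (\<lambda>x. c * f x) m = c * mulv v f m"
  "mulv v (\<lambda>x. \<Sum>u\<in>C. h u x) m = (\<Sum>u\<in>C. mulv v (h u) m)"
  by (auto simp: mulv_def)

lemma mulv_commute: "mulv v (mulv u f) m = mulv u (mulv v f) m"
  by (cases "u = v") (auto simp: mulv_def expo_simps when_def diff_right_commute)

lemma der_mulv: "der v (mulv u f) m = mulv u (der v f) m + (if u = v then f m else 0)"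
proof (cases "u = v")
  case True
  then show ?thesis
    by (cases "expo m v > 0")
      (auto simp: der_def mulv_def expo_simps diff_var_mono_add_cancel ring_distribs)
next
  case False
  then show ?thesis
    by (cases "expo m u > 0") (auto simp: der_def mulv_def expo_simps add_diff_var_mono_commute)
qed

lemma mulv_der_same: "mulv v (der v f) m = of_nat (expo m v) * f m"
  by (auto simp: mulv_def der_def expo_simps diff_var_mono_add_cancel)

lemma aop_simps:
  "aop lam r (\<lambda>x. f x + g x) = (\<lambda>x. aop lam r f x + aop lam r g x)"
  "aop lam r (\<lambda>x. f x - g x) = (\<lambda>x. aop lam r f x - aop lam r g x)"
  "aop lam r (\<lambda>x. c * f x) = (\<lambda>x. c * aop lam r f x)"
  by (auto simp: aop_def mulv_def der_def algebra_simps)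

lemma astar_simps:
  "astar mu s (\<lambda>x. f x + g x) = (\<lambda>x. astar mu s f x + astar mu s g x)"
  "astar mu s (\<lambda>x. f x - g x) = (\<lambda>x. astar mu s f x - astar mu s g x)"
  "astar mu s (\<lambda>x. c * f x) = (\<lambda>x. c * astar mu s f x)"
  by (auto simp: astar_def mulv_def der_def algebra_simps)

lemma Eop_simps:
  "Eop lam mu i j (\<lambda>x. f x - g x) = (\<lambda>x. Eop lam mu i j f x - Eop lam mu i j g x)"
  "Eop lam mu i j (\<lambda>x. c * f x) = (\<lambda>x. c * Eop lam mu i j f x)"
  by (auto simp: Eop_def aop_simps astar_simps)

definition weight :: "(var \<Rightarrow> int) \<Rightarrow> mono \<Rightarrow> int" where
  "weight h m = (\<Sum>v\<in>Poly_Mapping.keys m. h v * int (expo m v))"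

lemma weight_add: "weight h (a + b) = weight h a + weight h b"
  unfolding weight_def
  by (rule Poly_Mapping.setsum_keys_plus_distrib) (auto simp: algebra_simps)

lemma weight_add_var_mono: "weight h (m + var_mono v) = weight h m + h v"
  unfolding weight_add by (simp add: weight_def)

lemma weight_diff_var_mono: "expo m v > 0 \<Longrightarrow> weight h (m - var_mono v) = weight h m - h v"
  using weight_add_var_mono[of h "m - var_mono v" v] diff_var_mono_add_cancel[of m v] by simp

lemma weight_eq_sum_superset:
  "finite S \<Longrightarrow> Poly_Mapping.keys m \<subseteq> S \<Longrightarrow> weight h m = (\<Sum>v\<in>S. h v * int (expo m v))"
  unfolding weight_def
  by (rule sum.mono_neutral_left) (auto simp: Poly_Mapping.in_keys_iff)

section \<open>The operator \<open>I\<close> in normal-ordered form\<close>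

definition Icoeff :: "(nat \<Rightarrow> complex) \<Rightarrow> (nat \<Rightarrow> complex) \<Rightarrow> var \<Rightarrow> complex" where
  "Icoeff lam mu v = (case v of Inr s \<Rightarrow> lam s | Inl r \<Rightarrow> mu (Suc r))"

lemma finite_Icoeff_support:
  assumes "\<forall>i>n. lam i = 0" and "\<forall>j>m. mu j = 0"
  shows "finite {u. Icoeff lam mu u \<noteq> 0}"
proof (rule finite_subset)
  show "{u. Icoeff lam mu u \<noteq> 0} \<subseteq> Inr ` {..n} \<union> Inl ` {..<m}"
  proof
    have "lam s \<noteq> 0 \<Longrightarrow> s \<le> n" for s
      using assms(1) leI by blast
    moreover have "mu (Suc r) \<noteq> 0 \<Longrightarrow> r < m" for r
      using assms(2) not_less_eq by (metis Suc_less_eq)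
    ultimately show "u \<in> Inr ` {..n} \<union> Inl ` {..<m}" if "u \<in> {u. Icoeff lam mu u \<noteq> 0}" for u
      using that by (cases u) (auto simp: Icoeff_def)
  qed
qed simp

definition Isign :: "var \<Rightarrow> int" where
  "Isign v = (case v of Inr s \<Rightarrow> 1 | Inl r \<Rightarrow> -1)"

text \<open>Normal ordering of \<open>\<Sum>\<^sub>j E\<^sub>j\<^sub>,\<^sub>j\<close> gives \<open>\<Sum>\<^sub>v Icoeff v \<cdot> x\<^sub>v + \<Sum>\<^sub>v Isign v \<cdot> x\<^sub>v \<partial>\<^sub>v\<close>, and
  \<open>\<Sum>\<^sub>v Isign v \<cdot> x\<^sub>v \<partial>\<^sub>v\<close> acts on the monomial \<open>m\<close> by \<open>weight Isign m\<close>. The sum is only meaningful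
  when \<^const>\<open>Icoeff\<close> has finite support; otherwise it is \<open>0\<close>.\<close>

definition Iclosed :: "(nat \<Rightarrow> complex) \<Rightarrow> (nat \<Rightarrow> complex) \<Rightarrow> vec \<Rightarrow> vec" where
  "Iclosed lam mu f = (\<lambda>m. (\<Sum>u | Icoeff lam mu u \<noteq> 0. Icoeff lam mu u * mulv u f m)
                           + of_int (weight Isign m) * f m)"

lemma Iclosed_simps:
  "Iclosed lam mu (\<lambda>x. 0) = (\<lambda>x. 0)"
  "Iclosed lam mu (\<lambda>x. f x + g x) = (\<lambda>x. Iclosed lam mu f x + Iclosed lam mu g x)"
  "Iclosed lam mu (\<lambda>x. f x - g x) = (\<lambda>x. Iclosed lam mu f x - Iclosed lam mu g x)"
  "Iclosed lam mu (\<lambda>x. c * f x) = (\<lambda>x. c * Iclosed lam mu f x)"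
  by (simp_all add: Iclosed_def mulv_simps algebra_simps sum.distrib sum_subtractf sum_distrib_left)

lemma der_Iclosed:
  assumes fin: "finite {u. Icoeff lam mu u \<noteq> 0}"
  shows "der v (Iclosed lam mu f) m
           = Iclosed lam mu (der v f) m + Icoeff lam mu v * f m + of_int (Isign v) * der v f m"
proof -
  let ?C = "{u. Icoeff lam mu u \<noteq> 0}"
  have "der v (Iclosed lam mu f) m
          = (\<Sum>u\<in>?C. Icoeff lam mu u * der v (mulv u f) m)
            + of_int (weight Isign m + Isign v) * der v f m"
    by (simp add: der_def Iclosed_def weight_add_var_mono sum_distrib_left algebra_simps)
  also have "(\<Sum>u\<in>?C. Icoeff lam mu u * der v (mulv u f) m)
      = (\<Sum>u\<in>?C. Icoeff lam mu u * mulv u (der v f) m)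
        + (\<Sum>u\<in>?C. Icoeff lam mu u * (if u = v then f m else 0))"
    by (simp add: der_mulv ring_distribs sum.distrib)
  also have "(\<Sum>u\<in>?C. Icoeff lam mu u * (if u = v then f m else 0)) = Icoeff lam mu v * f m"
    using fin by (simp add: if_distrib sum.delta cong: if_cong)
  finally show ?thesis by (simp add: Iclosed_def algebra_simps)
qed

lemma mulv_Iclosed:
  "mulv v (Iclosed lam mu f) m = Iclosed lam mu (mulv v f) m - of_int (Isign v) * mulv v f m"
proof -
  have "mulv v (\<lambda>x. of_int (weight Isign x) * f x) m
          = of_int (weight Isign m - Isign v) * mulv v f m"
    by (simp add: mulv_def weight_diff_var_mono)
  then show ?thesis
    unfolding Iclosed_def mulv_simps by (simp add: mulv_commute[of v _ f m] algebra_simps)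
qed

lemma aop_Iclosed:
  assumes "finite {u. Icoeff lam mu u \<noteq> 0}"
  shows "aop lam r (Iclosed lam mu f) = (\<lambda>x. Iclosed lam mu (aop lam r f) x + aop lam r f x)"
proof
  fix x :: mono
  show "aop lam r (Iclosed lam mu f) x = Iclosed lam mu (aop lam r f) x + aop lam r f x"
  proof (cases "r < 0")
    case True
    then show ?thesis by (simp add: aop_def mulv_Iclosed Isign_def)
  next
    case False
    then show ?thesis
      by (simp add: aop_def der_Iclosed[OF assms] Iclosed_simps)
        (simp add: Isign_def Icoeff_def algebra_simps)
  qed
qed

lemma astar_Iclosed:
  assumes "finite {u. Icoeff lam mu u \<noteq> 0}"
  shows "astar mu s (Iclosed lam mu f) = (\<lambda>x. Iclosed lam mu (astar mu s f) x - astar mu s f x)"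
proof
  fix x :: mono
  show "astar mu s (Iclosed lam mu f) x = Iclosed lam mu (astar mu s f) x - astar mu s f x"
  proof (cases "s \<le> 0")
    case True
    then show ?thesis by (simp add: astar_def mulv_Iclosed Isign_def)
  next
    case False
    then have "Suc (nat s - 1) = nat s" by simp
    with False show ?thesis
      by (simp add: astar_def der_Iclosed[OF assms] Iclosed_simps)
        (simp add: Isign_def Icoeff_def algebra_simps)
  qed
qed

lemma Eop_Iclosed:
  assumes "finite {u. Icoeff lam mu u \<noteq> 0}"
  shows "Eop lam mu i j (Iclosed lam mu f) = Iclosed lam mu (Eop lam mu i j f)"
  by (auto simp: Eop_def aop_Iclosed[OF assms] astar_Iclosed[OF assms] aop_simps astar_simps)

lemma M1_zero: "(\<lambda>x. 0) \<in> M1"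
  by (simp add: M1_def)

lemma M1_mono: "g \<in> M1 \<Longrightarrow> (\<And>x. g x = 0 \<Longrightarrow> f x = 0) \<Longrightarrow> f \<in> M1"
  unfolding M1_def by (auto elim: finite_subset[rotated])

lemma M1_add: "f \<in> M1 \<Longrightarrow> g \<in> M1 \<Longrightarrow> (\<lambda>x. f x + g x) \<in> M1"
  and M1_diff: "f \<in> M1 \<Longrightarrow> g \<in> M1 \<Longrightarrow> (\<lambda>x. f x - g x) \<in> M1"
  unfolding M1_def by (auto intro: finite_subset[of _ "{m. f m \<noteq> 0} \<union> {m. g m \<noteq> 0}"])

lemma M1_mult: "f \<in> M1 \<Longrightarrow> (\<lambda>x. a x * f x) \<in> M1"
  by (erule M1_mono) simp

lemma M1_sum: "finite C \<Longrightarrow> (\<And>u. u \<in> C \<Longrightarrow> h u \<in> M1) \<Longrightarrow> (\<lambda>x. \<Sum>u\<in>C. h u x) \<in> M1"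
  by (induction C rule: finite_induct) (simp_all add: M1_zero M1_add)

lemma M1_mulv:
  assumes "f \<in> M1"
  shows "mulv v f \<in> M1"
proof -
  have "{m. mulv v f m \<noteq> 0} \<subseteq> (\<lambda>m. m + var_mono v) ` {m. f m \<noteq> 0}"
  proof
    fix m assume "m \<in> {m. mulv v f m \<noteq> 0}"
    then have "expo m v > 0" "f (m - var_mono v) \<noteq> 0" by (auto simp: mulv_def split: if_splits)
    then show "m \<in> (\<lambda>m. m + var_mono v) ` {m. f m \<noteq> 0}"
      by (intro image_eqI[of _ _ "m - var_mono v"]) (auto simp: diff_var_mono_add_cancel)
  qed
  then show ?thesis using assms unfolding M1_def by (auto elim: finite_subset)
qed

lemma M1_der:
  assumes "f \<in> M1"
  shows "der v f \<in> M1"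
proof -
  have "{m. der v f m \<noteq> 0} \<subseteq> (\<lambda>m. m - var_mono v) ` {m. f m \<noteq> 0}"
    by (auto simp: der_def intro: image_eqI[of _ _ "_ + var_mono v"])
  then show ?thesis using assms unfolding M1_def by (auto elim: finite_subset)
qed

lemma M1_Iclosed: "finite {u. Icoeff lam mu u \<noteq> 0} \<Longrightarrow> f \<in> M1 \<Longrightarrow> Iclosed lam mu f \<in> M1"
  unfolding Iclosed_def by (intro M1_add M1_sum M1_mult M1_mulv)

lemma M1_Eop: "f \<in> M1 \<Longrightarrow> Eop lam mu i j f \<in> M1"
proof -
  have aop: "g \<in> M1 \<Longrightarrow> aop lam r g \<in> M1" for g r
    unfolding aop_def by (auto intro: M1_add M1_mult M1_mulv M1_der)
  have astar: "g \<in> M1 \<Longrightarrow> astar mu s g \<in> M1" for g s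
    unfolding astar_def by (auto intro: M1_diff M1_mult M1_mulv M1_der)
  show "f \<in> M1 \<Longrightarrow> Eop lam mu i j f \<in> M1"
    unfolding Eop_def by (auto intro: aop astar)
qed

lemma M1_wvec: "wvec \<in> M1"
  unfolding M1_def wvec_def by simp

section \<open>\<open>I\<close> agrees with its normal-ordered form\<close>

definition diag_var :: "int \<Rightarrow> var" where
  "diag_var j = (if j \<le> 0 then Inr (nat (- j)) else Inl (nat j - 1))"

definition diag_index :: "var \<Rightarrow> int" where
  "diag_index v = (case v of Inr s \<Rightarrow> - int s | Inl r \<Rightarrow> int r + 1)"

lemma diag_var_index: "diag_var (diag_index v) = v"
  by (cases v) (auto simp: diag_var_def diag_index_def)

lemma inj_diag_index: "inj diag_index"
  by (metis injI diag_var_index)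

lemma diag_index_var: "diag_index (diag_var j) = j"
  by (auto simp: diag_var_def diag_index_def)

lemma Eop_diag:
  "Eop lam mu j j f m = Icoeff lam mu (diag_var j) * mulv (diag_var j) f m
     + of_int (Isign (diag_var j)) * of_nat (expo m (diag_var j)) * f m"
proof (cases "j \<le> 0")
  case True
  then show ?thesis
    by (simp add: Eop_def astar_def aop_def mulv_simps mulv_der_same diag_var_def Icoeff_def Isign_def)
next
  case False
  then have "Suc (nat j - 1) = nat j" by simp
  with False show ?thesis
    by (simp add: Eop_def astar_def aop_def mulv_simps mulv_der_same diag_var_def Icoeff_def Isign_def)
qed

lemma Iop_eq_Iclosed:
  assumes fin: "finite {u. Icoeff lam mu u \<noteq> 0}" and "f \<in> M1"
  shows "Iop lam mu f = Iclosed lam mu f"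
proof
  fix x :: mono
  define C where "C = {u. Icoeff lam mu u \<noteq> 0}"
  define J where "J = {j. Eop lam mu j j f \<noteq> (\<lambda>x. 0)}"
  define W where "W = C \<union> \<Union>(Poly_Mapping.keys ` {m. f m \<noteq> 0}) \<union> Poly_Mapping.keys x"
  have "finite W" using fin \<open>f \<in> M1\<close> by (simp add: W_def C_def M1_def)
  have "diag_var j \<in> W" if "j \<in> J" for j
  proof (cases "diag_var j \<in> C")
    case False
    from that obtain m where "Eop lam mu j j f m \<noteq> 0" by (auto simp: J_def)
    with False have "expo m (diag_var j) \<noteq> 0" "f m \<noteq> 0" by (auto simp: Eop_diag C_def)
    then show ?thesis by (auto simp: W_def Poly_Mapping.in_keys_iff)
  qed (simp add: W_def)
  then have "J \<subseteq> diag_index ` W" by (metis subsetI image_eqI diag_index_var)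
  have "Iop lam mu f x = (\<Sum>j\<in>J. Eop lam mu j j f x)"
    by (simp add: Iop_def J_def)
  also have "\<dots> = (\<Sum>j\<in>diag_index ` W. Eop lam mu j j f x)"
    by (rule sum.mono_neutral_left) (use \<open>finite W\<close> \<open>J \<subseteq> _\<close> in \<open>auto simp: J_def\<close>)
  also have "\<dots> = (\<Sum>v\<in>W. Eop lam mu (diag_index v) (diag_index v) f x)"
    by (simp add: sum.reindex[OF inj_on_subset[OF inj_diag_index subset_UNIV]])
  also have "\<dots> = (\<Sum>v\<in>W. Icoeff lam mu v * mulv v f x)
                  + (\<Sum>v\<in>W. of_int (Isign v * int (expo x v))) * f x"
    by (simp add: Eop_diag diag_var_index sum.distrib sum_distrib_right)
  also have "(\<Sum>v\<in>W. Icoeff lam mu v * mulv v f x) = (\<Sum>v\<in>C. Icoeff lam mu v * mulv v f x)"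
    by (rule sum.mono_neutral_right) (use \<open>finite W\<close> in \<open>auto simp: W_def C_def\<close>)
  also have "(\<Sum>v\<in>W. of_int (Isign v * int (expo x v))) = (of_int (weight Isign x) :: complex)"
    using weight_eq_sum_superset[of W x Isign] \<open>finite W\<close> by (simp add: W_def)
  finally show "Iop lam mu f x = Iclosed lam mu f x" by (simp add: Iclosed_def C_def)
qed

section \<open>\<open>I - d\<close> never hits the vacuum line\<close>

lemma Iclosed_minus_scalar_nonzero:
  assumes fin: "finite {u. Icoeff lam mu u \<noteq> 0}" and v0: "Icoeff lam mu v0 \<noteq> 0"
    and "q \<in> M1" "q \<noteq> (\<lambda>x. 0)"
  shows "\<exists>M. M \<noteq> 0 \<and> Iclosed lam mu q M - d * q M \<noteq> 0"
proof -
  let ?C = "{u. Icoeff lam mu u \<noteq> 0}"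
  define S where "S = {m. q m \<noteq> 0}"
  have "finite S" "S \<noteq> {}" using assms(3,4) by (auto simp: S_def M1_def)
  define h :: "var \<Rightarrow> int" where "h u = (if u \<in> ?C then 1 else 0) + (if u = v0 then 1 else 0)" for u
  have "Max (weight h ` S) \<in> weight h ` S" using \<open>finite S\<close> \<open>S \<noteq> {}\<close> by (intro Max_in) auto
  then obtain m0 where "m0 \<in> S" "weight h m0 = Max (weight h ` S)" by auto
  have above_max: "q m = 0" if "weight h m > weight h m0" for m
  proof (rule ccontr)
    assume "q m \<noteq> 0"
    then have "weight h m \<le> Max (weight h ` S)" using \<open>finite S\<close> by (intro Max_ge) (auto simp: S_def)
    with that \<open>weight h m0 = _\<close> show False by simp
  qed
  define M where "M = m0 + var_mono v0"
  have "q M = 0"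
    using v0 by (intro above_max) (simp add: M_def weight_add_var_mono h_def)
  have "mulv u q M = 0" if "u \<in> ?C - {v0}" for u
  proof (cases "expo M u > 0")
    case True
    with that have "weight h (M - var_mono u) > weight h m0"
      using v0 by (simp add: weight_diff_var_mono M_def weight_add_var_mono h_def)
    then show ?thesis by (simp add: mulv_def above_max)
  qed (simp add: mulv_def)
  then have "(\<Sum>u\<in>?C. Icoeff lam mu u * mulv u q M) = Icoeff lam mu v0 * mulv v0 q M"
    using fin v0 by (simp add: sum.remove[of ?C v0])
  also have "mulv v0 q M = q m0"
    by (simp add: mulv_def M_def expo_simps)
  finally have "Iclosed lam mu q M - d * q M = Icoeff lam mu v0 * q m0"
    by (simp add: Iclosed_def \<open>q M = 0\<close>)
  moreover have "q m0 \<noteq> 0" using \<open>m0 \<in> S\<close> by (simp add: S_def)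
  moreover have "M \<noteq> 0" unfolding M_def by (rule add_var_mono_neq_zero)
  ultimately show ?thesis using v0 by auto
qed

lemma Iclosed_neq_multiple_wvec:
  assumes "finite {u. Icoeff lam mu u \<noteq> 0}" "Icoeff lam mu v0 \<noteq> 0" "q \<in> M1" "q \<noteq> (\<lambda>x. 0)"
  shows "Iclosed lam mu q \<noteq> (\<lambda>x. c * wvec x)"
  using Iclosed_minus_scalar_nonzero[OF assms, of 0] by (auto simp: wvec_def)

lemma M1_Iclosed_pow:
  "finite {u. Icoeff lam mu u \<noteq> 0} \<Longrightarrow> f \<in> M1 \<Longrightarrow> (Iclosed lam mu ^^ k) f \<in> M1"
  by (induction k) (simp_all add: M1_Iclosed)

lemma Iclosed_pow_wvec_neq_multiple_wvec:
  assumes fin: "finite {u. Icoeff lam mu u \<noteq> 0}" and v0: "Icoeff lam mu v0 \<noteq> 0"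
  shows "(Iclosed lam mu ^^ Suc k) wvec \<noteq> (\<lambda>x. c * wvec x)"
proof -
  have "(Iclosed lam mu ^^ k) wvec \<noteq> (\<lambda>x. 0)" for k
  proof (induction k)
    case 0
    have "wvec 0 \<noteq> 0" by (simp add: wvec_def)
    then show ?case by auto
  next
    case (Suc k)
    have "Iclosed lam mu ((Iclosed lam mu ^^ k) wvec) \<noteq> (\<lambda>x. 0 * wvec x)"
      by (rule Iclosed_neq_multiple_wvec[OF fin v0 M1_Iclosed_pow[OF fin M1_wvec] Suc])
    then show ?case by simp
  qed
  then show ?thesis
    unfolding funpow.simps comp_def
    by (rule Iclosed_neq_multiple_wvec[OF fin v0 M1_Iclosed_pow[OF fin M1_wvec]])
qed

definition I_minus_range :: "(nat \<Rightarrow> complex) \<Rightarrow> (nat \<Rightarrow> complex) \<Rightarrow> complex \<Rightarrow> vec set" where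
  "I_minus_range lam mu d = {(\<lambda>x. Iclosed lam mu q x - d * q x) | q. q \<in> M1}"

lemma I_minus_rangeI: "q \<in> M1 \<Longrightarrow> (\<lambda>x. Iclosed lam mu q x - d * q x) \<in> I_minus_range lam mu d"
  by (auto simp: I_minus_range_def)

lemma wvec_notin_I_minus_range:
  assumes fin: "finite {u. Icoeff lam mu u \<noteq> 0}" and v0: "Icoeff lam mu v0 \<noteq> 0"
  shows "wvec \<notin> I_minus_range lam mu d"
proof
  assume "wvec \<in> I_minus_range lam mu d"
  then obtain q where q: "q \<in> M1" "wvec = (\<lambda>x. Iclosed lam mu q x - d * q x)"
    by (auto simp: I_minus_range_def)
  show False
  proof (cases "q = (\<lambda>x. 0)")
    case True
    then show False using fun_cong[OF q(2), of 0] by (simp add: Iclosed_simps wvec_def)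
  next
    case False
    then obtain M where "M \<noteq> 0" "Iclosed lam mu q M - d * q M \<noteq> 0"
      using Iclosed_minus_scalar_nonzero[OF fin v0 q(1)] by blast
    then show False using fun_cong[OF q(2), of M] by (simp add: wvec_def)
  qed
qed

lemma gen_sub_subset_I_minus_range:
  assumes fin: "finite {u. Icoeff lam mu u \<noteq> 0}" and "S \<subseteq> I_minus_range lam mu d"
  shows "gen_sub lam mu S \<subseteq> I_minus_range lam mu d"
proof
  have preimage: "\<exists>q\<in>M1. v = (\<lambda>x. Iclosed lam mu q x - d * q x)"
    if "v \<in> I_minus_range lam mu d" for v
    using that by (auto simp: I_minus_range_def)
  fix v assume "v \<in> gen_sub lam mu S"
  then show "v \<in> I_minus_range lam mu d"
  proof (induction rule: gen_sub.induct)
    case (base v)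
    then show ?case using assms(2) by blast
  next
    case zero
    show ?case using I_minus_rangeI[OF M1_zero, of lam mu d] by (simp add: Iclosed_simps)
  next
    case (add u v)
    then obtain p q where "p \<in> M1" "u = (\<lambda>x. Iclosed lam mu p x - d * p x)"
      and "q \<in> M1" "v = (\<lambda>x. Iclosed lam mu q x - d * q x)" by (meson preimage)
    then have "(\<lambda>m. u m + v m) = (\<lambda>x. Iclosed lam mu (\<lambda>x. p x + q x) x - d * (p x + q x))"
      by (simp add: Iclosed_simps algebra_simps)
    then show ?case using I_minus_rangeI[OF M1_add[OF \<open>p \<in> M1\<close> \<open>q \<in> M1\<close>]] by simp
  next
    case (smult v c)
    then obtain q where "q \<in> M1" "v = (\<lambda>x. Iclosed lam mu q x - d * q x)" by (meson preimage)
    then have "(\<lambda>m. c * v m) = (\<lambda>x. Iclosed lam mu (\<lambda>x. c * q x) x - d * (c * q x))"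
      by (simp add: Iclosed_simps algebra_simps)
    then show ?case using I_minus_rangeI[OF M1_mult[OF \<open>q \<in> M1\<close>]] by simp
  next
    case (Eop v i j)
    then obtain q where "q \<in> M1" "v = (\<lambda>x. Iclosed lam mu q x - d * q x)" by (meson preimage)
    then have "Eop lam mu i j v = (\<lambda>x. Iclosed lam mu (Eop lam mu i j q) x - d * Eop lam mu i j q x)"
      by (simp add: Eop_simps Eop_Iclosed[OF fin])
    then show ?case using I_minus_rangeI[OF M1_Eop[OF \<open>q \<in> M1\<close>]] by simp
  qed
qed

lemma gen_sub_psubset_M1:
  assumes fin: "finite {u. Icoeff lam mu u \<noteq> 0}" and v0: "Icoeff lam mu v0 \<noteq> 0"
    and "S \<subseteq> I_minus_range lam mu d"
  shows "gen_sub lam mu S \<subset> M1"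
proof -
  have "I_minus_range lam mu d \<subseteq> M1"
    by (auto simp: I_minus_range_def intro!: M1_diff M1_mult M1_Iclosed[OF fin])
  then show ?thesis
    using gen_sub_subset_I_minus_range[OF fin assms(3)] wvec_notin_I_minus_range[OF fin v0] M1_wvec
    by blast
qed

section \<open>Eigenvectors of \<open>E\<^sub>-\<^sub>i\<^sub>,\<^sub>j\<close>\<close>

lemma Eop_wvec:
  assumes "j \<ge> 1"
  shows "Eop lam mu (- int i) (int j) wvec = (\<lambda>x. lam i * mu j * wvec x)"
proof -
  have der_wvec: "der v wvec m = 0" for v m
    using add_var_mono_neq_zero[of m v] by (simp add: der_def wvec_def)
  have "astar mu (int j) wvec = (\<lambda>x. mu j * wvec x)"
    using assms by (auto simp: astar_def der_wvec)
  moreover have "aop lam (int i) wvec = (\<lambda>x. lam i * wvec x)"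
    by (auto simp: aop_def der_wvec)
  ultimately show ?thesis
    using assms by (simp add: Eop_def aop_simps) (simp add: algebra_simps)
qed

lemma Eop_Iclosed_pow_wvec:
  assumes "finite {u. Icoeff lam mu u \<noteq> 0}" and "j \<ge> 1"
  shows "Eop lam mu (- int i) (int j) ((Iclosed lam mu ^^ k) wvec)
           = (\<lambda>x. lam i * mu j * (Iclosed lam mu ^^ k) wvec x)"
  by (induction k) (simp_all add: Eop_wvec[OF assms(2)] Eop_Iclosed[OF assms(1)] Iclosed_simps)

lemma Iop_pow_wvec:
  assumes "finite {u. Icoeff lam mu u \<noteq> 0}"
  shows "(Iop lam mu ^^ k) wvec = (Iclosed lam mu ^^ k) wvec"
  by (induction k) (simp_all add: Iop_eq_Iclosed[OF assms] M1_Iclosed_pow[OF assms M1_wvec])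

theorem lemma6p2:
  fixes n m :: nat and lam mu :: "nat \<Rightarrow> complex"
  assumes "m \<ge> 1"
    and "\<forall>i>n. lam i = 0"
    and "\<forall>j>m. mu j = 0"
    and "\<exists>i\<le>n. lam i \<noteq> 0"
    and "\<exists>j\<in>{1..m}. mu j \<noteq> 0"
  shows "(\<forall>k\<ge>1. (\<forall>i j. j \<ge> 1 \<longrightarrow>
              Eop lam mu (- int i) (int j) ((Iop lam mu ^^ k) wvec)
                = (\<lambda>x. lam i * mu j * (Iop lam mu ^^ k) wvec x))
           \<and> (\<forall>c. (Iop lam mu ^^ k) wvec \<noteq> (\<lambda>x. c * wvec x)))
       \<and> (\<forall>d::complex. gen_sub lam mu
              {(\<lambda>x. (Iop lam mu ^^ (k+1)) wvec x - d * (Iop lam mu ^^ k) wvec x) | k. True}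
            \<subset> M1)"
proof -
  have fin: "finite {u. Icoeff lam mu u \<noteq> 0}"
    using assms(2,3) by (rule finite_Icoeff_support)
  obtain i0 where "lam i0 \<noteq> 0" using assms(4) by blast
  then have v0: "Icoeff lam mu (Inr i0) \<noteq> 0" by (simp add: Icoeff_def)
  note Iop_pow = Iop_pow_wvec[OF fin]
  have eigen: "Eop lam mu (- int i) (int j) ((Iop lam mu ^^ k) wvec)
                 = (\<lambda>x. lam i * mu j * (Iop lam mu ^^ k) wvec x)" if "j \<ge> 1" for i j k
    using Eop_Iclosed_pow_wvec[OF fin that] by (simp add: Iop_pow)
  have not_vacuum: "(Iop lam mu ^^ k) wvec \<noteq> (\<lambda>x. c * wvec x)" if "k \<ge> 1" for k c
    using that Iclosed_pow_wvec_neq_multiple_wvec[OF fin v0] unfolding Iop_pow by (cases k) simp_all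
  have gens: "{(\<lambda>x. (Iop lam mu ^^ (k+1)) wvec x - d * (Iop lam mu ^^ k) wvec x) | k. True}
                \<subseteq> I_minus_range lam mu d" for d
    unfolding Iop_pow using I_minus_rangeI[OF M1_Iclosed_pow[OF fin M1_wvec]] by auto
  show ?thesis by (intro conjI allI impI eigen not_vacuum gen_sub_psubset_M1[OF fin v0 gens])
qed

end
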